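(* Let $X,Y$ be random variables on a probability space $(\Omega,\mathcal F,\mathbb P)$ such that $X$, $Y$ and $XY$ are integrable. Then: (i) If $X$ and $Y$ are independent, then $\{\mathbb P_A\times\mathbb P_B: A,B\in\sigma^+(X)\}\subseteq\mathcal P_{X,Y}$ and $\{\mathbb P_A\times\mathbb P_B: A,B\in\sigma^+(Y)\}\subseteq\mathcal P_{X,Y}$. (ii) If $\{\mathbb P_A\times\mathbb P_B: A,B\in\sigma^+(X)\}\subseteq\mathcal P_{X,Y}$, then for all $A,B\in\sigma^+(X)$, $\mathbb E[XY\mid A]+\mathbb E[XY\mid B]-\mathbb E[X\mid A]\mathbb E[Y\mid B]-\mathbb E[Y\mid A]\mathbb E[X\mid B]\ge0$; in particular (taking $A=B$) $\mathbb E[XY\mid A]\ge \mathbb E[X\mid A]\mathbb E[Y\mid A]$ for every $A\in\sigma^+(X)$.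
   Context: $\sigma^+(Z)=\{A\in\sigma(Z):\mathbb P(A)>0\}$, where $\sigma(Z)$ is the $\sigma$-field generated by $Z$; $\mathbb P_A=\mathbb P(\cdot\mid A)$ and $\mathbb E[\cdot\mid A]$ is expectation under $\mathbb P_A$. $\mathcal P_{X,Y}$ is the set of all product probability measures $\pi_1\times\pi_2$ on $(\Omega^2,\mathcal F\otimes\mathcal F)$ such that $\iint_{\Omega^2}(X(\omega)-X(\omega'))(Y(\omega)-Y(\omega'))\,\pi_1(\mathrm d\omega)\pi_2(\mathrm d\omega')\ge0$. *)

theory Defs
  imports "HOL-Probability.Probability"
begin

definition sigma_plus :: "'a measure \<Rightarrow> ('a \<Rightarrow> real) \<Rightarrow> 'a set set" where
  "sigma_plus M Z = {A \<in> sets (vimage_algebra (space M) Z borel). measure M A > 0}"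

definition cond_prob :: "'a measure \<Rightarrow> 'a set \<Rightarrow> 'a measure" where
  "cond_prob M A = uniform_measure M A"

definition cond_expect_on :: "'a measure \<Rightarrow> 'a set \<Rightarrow> ('a \<Rightarrow> real) \<Rightarrow> real" where
  "cond_expect_on M A f = (\<integral>\<omega>. f \<omega> \<partial>(cond_prob M A))"

definition PXY :: "'a measure \<Rightarrow> ('a \<Rightarrow> real) \<Rightarrow> ('a \<Rightarrow> real) \<Rightarrow> ('a \<times> 'a) measure set" where
  "PXY M X Y = {p1 \<Otimes>\<^sub>M p2 | p1 p2.
      prob_space p1 \<and> prob_space p2 \<and> sets p1 = sets M \<and> sets p2 = sets M \<and>
      integrable (p1 \<Otimes>\<^sub>M p2) (\<lambda>z. (X (fst z) - X (snd z)) * (Y (fst z) - Y (snd z))) \<and>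
      (\<integral>z. (X (fst z) - X (snd z)) * (Y (fst z) - Y (snd z)) \<partial>(p1 \<Otimes>\<^sub>M p2)) \<ge> 0}"

end

theory Submission
  imports Defs
begin

(*
  For events A, B of positive probability, expanding the integrand and applying Fubini gives
    \<integral>\<integral> (X w - X w') (Y w - Y w') dP_A(w) dP_B(w')
      = E[XY|A] + E[XY|B] - E[X|A] E[Y|B] - E[Y|A] E[X|B],
  so P_A \<times> P_B belongs to P_{X,Y} exactly when this quantity is nonnegative; part (ii) reads this
  backwards, and A = B gives the last claim. If X and Y are independent and A = X^{-1}(S), then
  1_A g(X) = (1_S g)(X) is again independent of Y, whence E[XY|A] = E[X|A] E[Y] and E[Y|A] = E[Y]:
  the quantity vanishes. Events of \<sigma>(Y) are handled by exchanging X and Y, under which the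
  integrand and P_{X,Y} are invariant.
*)

lemma (in prob_space) indep_var_sym:
  assumes "indep_var S X T Y"
  shows "indep_var T Y S X"
proof -
  note indep = assms[unfolded indep_var_eq indep_sets2_eq]
  show ?thesis
    unfolding indep_var_eq indep_sets2_eq
  proof (intro conjI ballI)
    fix a b
    assume "a \<in> sigma_sets (space M) {Y -` A \<inter> space M |A. A \<in> sets T}"
      and "b \<in> sigma_sets (space M) {X -` A \<inter> space M |A. A \<in> sets S}"
    with indep have "prob (b \<inter> a) = prob b * prob a"
      by blast
    then show "prob (a \<inter> b) = prob a * prob b"
      by (simp add: Int_commute mult.commute)
  qed (use indep in auto)
qed

lemma PXY_swap: "PXY M X Y = PXY M Y X"
  unfolding PXY_def by (simp add: mult.commute)

lemma sigma_plusE: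
  assumes "Z \<in> borel_measurable M" and "A \<in> sigma_plus M Z"
  obtains S where "S \<in> sets borel" "A = Z -` S \<inter> space M" "A \<in> sets M" "measure M A > 0"
proof -
  from assms obtain S where "S \<in> sets borel" "A = Z -` S \<inter> space M" "measure M A > 0"
    unfolding sigma_plus_def by (auto simp: sets_vimage_algebra2)
  with assms(1) show ?thesis
    using measurable_sets that by blast
qed

lemma (in finite_measure) prob_space_cond_prob:
  assumes "A \<in> sets M" "measure M A > 0"
  shows "prob_space (cond_prob M A)"
  unfolding cond_prob_def using assms
  by (intro prob_space_uniform_measure) (auto simp: emeasure_eq_measure)

lemma (in finite_measure) cond_prob_eq_density:
  assumes "A \<in> sets M" "measure M A > 0"
  shows "cond_prob M A = density M (\<lambda>x. ennreal (indicator A x / measure M A))"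
proof -
  have "indicator A x / ennreal (measure M A) = ennreal (indicator A x / measure M A)" for x
    using divide_ennreal[of 1 "measure M A"] assms(2) by (auto split: split_indicator)
  then show ?thesis
    unfolding cond_prob_def uniform_measure_def by (simp add: emeasure_eq_measure)
qed

lemma (in finite_measure) integrable_cond_prob:
  fixes f :: "'a \<Rightarrow> real"
  assumes "A \<in> sets M" "measure M A > 0" and "integrable M f"
  shows "integrable (cond_prob M A) f"
  unfolding cond_prob_eq_density[OF assms(1,2)]
  using integrable_mult_indicator[OF assms(1,3)] assms
  by (subst integrable_density) (auto simp: divide_simps)

lemma (in finite_measure) cond_expect_on_eq_indicator:
  fixes f :: "'a \<Rightarrow> real"
  assumes "A \<in> sets M" "measure M A > 0" and "f \<in> borel_measurable M"
  shows "cond_expect_on M A f = (\<integral>x. indicator A x * f x \<partial>M) / measure M A"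
  unfolding cond_expect_on_def cond_prob_eq_density[OF assms(1,2)] using assms
  by (subst integral_density) auto

lemma (in pair_sigma_finite)
  fixes f :: "'a \<Rightarrow> real" and g :: "'b \<Rightarrow> real"
  assumes f: "integrable M1 f" and g: "integrable M2 g"
  shows integrable_mult_fst_snd: "integrable (M1 \<Otimes>\<^sub>M M2) (\<lambda>z. f (fst z) * g (snd z))"
    and integral_mult_fst_snd:
      "(\<integral>z. f (fst z) * g (snd z) \<partial>(M1 \<Otimes>\<^sub>M M2)) = integral\<^sup>L M1 f * integral\<^sup>L M2 g"
proof -
  have [measurable]: "f \<in> borel_measurable M1" "g \<in> borel_measurable M2"
    using f g by auto
  have "(\<integral>\<^sup>+ z. ennreal (norm (f (fst z) * g (snd z))) \<partial>(M1 \<Otimes>\<^sub>M M2))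
      = (\<integral>\<^sup>+x. (\<integral>\<^sup>+y. ennreal (norm (f x)) * ennreal (norm (g y)) \<partial>M2) \<partial>M1)"
    by (subst M2.nn_integral_fst[symmetric]) (auto simp: abs_mult ennreal_mult)
  also have "\<dots> = (\<integral>\<^sup>+y. ennreal (norm (g y)) \<partial>M2) * (\<integral>\<^sup>+x. ennreal (norm (f x)) \<partial>M1)"
    by (simp add: nn_integral_cmult nn_integral_multc mult.commute)
  also have "\<dots> < \<infinity>"
    using f g unfolding integrable_iff_bounded by (simp add: ennreal_mult_less_top)
  finally show int: "integrable (M1 \<Otimes>\<^sub>M M2) (\<lambda>z. f (fst z) * g (snd z))"
    unfolding integrable_iff_bounded by auto
  show "(\<integral>z. f (fst z) * g (snd z) \<partial>(M1 \<Otimes>\<^sub>M M2)) = integral\<^sup>L M1 f * integral\<^sup>L M2 g"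
    using integral_fst'[OF int] by simp
qed

lemma
  fixes X Y :: "'a \<Rightarrow> real"
  assumes "prob_space P" "prob_space Q"
    and "integrable P X" "integrable P Y" "integrable P (\<lambda>\<omega>. X \<omega> * Y \<omega>)"
    and "integrable Q X" "integrable Q Y" "integrable Q (\<lambda>\<omega>. X \<omega> * Y \<omega>)"
  shows integrable_difference_product:
      "integrable (P \<Otimes>\<^sub>M Q) (\<lambda>z. (X (fst z) - X (snd z)) * (Y (fst z) - Y (snd z)))"
    and integral_difference_product:
      "(\<integral>z. (X (fst z) - X (snd z)) * (Y (fst z) - Y (snd z)) \<partial>(P \<Otimes>\<^sub>M Q)) =
         (\<integral>\<omega>. X \<omega> * Y \<omega> \<partial>P) + (\<integral>\<omega>. X \<omega> * Y \<omega> \<partial>Q)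
         - integral\<^sup>L P X * integral\<^sup>L Q Y - integral\<^sup>L P Y * integral\<^sup>L Q X"
proof -
  interpret P: prob_space P by fact
  interpret Q: prob_space Q by fact
  interpret pair_sigma_finite P Q ..
  \<comment> \<open>The factors \<open>1\<close> turn every summand into a product \<open>f (fst z) * g (snd z)\<close>.\<close>
  have expand: "(\<lambda>z. (X (fst z) - X (snd z)) * (Y (fst z) - Y (snd z))) =
    (\<lambda>z. X (fst z) * Y (fst z) * 1 + 1 * (X (snd z) * Y (snd z))
         - X (fst z) * Y (snd z) - Y (fst z) * X (snd z))"
    by (auto simp: algebra_simps)
  have one: "integrable P (\<lambda>_. 1::real)" "integrable Q (\<lambda>_. 1::real)"
    by auto
  note products = integrable_mult_fst_snd[OF assms(5) one(2)] integrable_mult_fst_snd[OF one(1) assms(8)]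
    integrable_mult_fst_snd[OF assms(3,7)] integrable_mult_fst_snd[OF assms(4,6)]
  show "integrable (P \<Otimes>\<^sub>M Q) (\<lambda>z. (X (fst z) - X (snd z)) * (Y (fst z) - Y (snd z)))"
    unfolding expand using products by auto
  show "(\<integral>z. (X (fst z) - X (snd z)) * (Y (fst z) - Y (snd z)) \<partial>(P \<Otimes>\<^sub>M Q)) =
         (\<integral>\<omega>. X \<omega> * Y \<omega> \<partial>P) + (\<integral>\<omega>. X \<omega> * Y \<omega> \<partial>Q)
         - integral\<^sup>L P X * integral\<^sup>L Q Y - integral\<^sup>L P Y * integral\<^sup>L Q X"
    unfolding expand using products
      integral_mult_fst_snd[OF assms(5) one(2)] integral_mult_fst_snd[OF one(1) assms(8)]
      integral_mult_fst_snd[OF assms(3,7)] integral_mult_fst_snd[OF assms(4,6)]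
    by (simp add: P.prob_space Q.prob_space)
qed

lemma (in finite_measure) cond_prob_pair_in_PXY_iff:
  fixes X Y :: "'a \<Rightarrow> real"
  assumes "A \<in> sets M" "measure M A > 0" and "B \<in> sets M" "measure M B > 0"
    and "integrable M X" "integrable M Y" "integrable M (\<lambda>\<omega>. X \<omega> * Y \<omega>)"
  shows "cond_prob M A \<Otimes>\<^sub>M cond_prob M B \<in> PXY M X Y \<longleftrightarrow>
    0 \<le> cond_expect_on M A (\<lambda>\<omega>. X \<omega> * Y \<omega>) + cond_expect_on M B (\<lambda>\<omega>. X \<omega> * Y \<omega>)
       - cond_expect_on M A X * cond_expect_on M B Y - cond_expect_on M A Y * cond_expect_on M B X"
    (is "_ \<longleftrightarrow> 0 \<le> ?D")
proof -
  note prob_spaces = prob_space_cond_prob[OF assms(1,2)] prob_space_cond_prob[OF assms(3,4)]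
  note integrable = integrable_cond_prob[OF assms(1,2,5)]
    integrable_cond_prob[OF assms(1,2,6)] integrable_cond_prob[OF assms(1,2,7)]
    integrable_cond_prob[OF assms(3,4,5)]
    integrable_cond_prob[OF assms(3,4,6)] integrable_cond_prob[OF assms(3,4,7)]
  note difference_product = integrable_difference_product[OF prob_spaces integrable]
    integral_difference_product[OF prob_spaces integrable]
  show ?thesis
  proof
    assume "cond_prob M A \<Otimes>\<^sub>M cond_prob M B \<in> PXY M X Y"
    then obtain p1 p2 where "cond_prob M A \<Otimes>\<^sub>M cond_prob M B = p1 \<Otimes>\<^sub>M p2"
      and "0 \<le> (\<integral>z. (X (fst z) - X (snd z)) * (Y (fst z) - Y (snd z)) \<partial>(p1 \<Otimes>\<^sub>M p2))"
      unfolding PXY_def by blast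
    then show "0 \<le> ?D"
      using difference_product(2) unfolding cond_expect_on_def by simp
  next
    assume "0 \<le> ?D"
    then show "cond_prob M A \<Otimes>\<^sub>M cond_prob M B \<in> PXY M X Y"
      unfolding PXY_def using prob_spaces difference_product
      by (intro CollectI exI[of _ "cond_prob M A"] exI[of _ "cond_prob M B"])
        (simp add: cond_expect_on_def cond_prob_def)
  qed
qed

lemma (in prob_space) cond_expect_on_indep_mult:
  fixes X Y :: "'a \<Rightarrow> real" and g :: "real \<Rightarrow> real"
  assumes indep: "indep_var borel X borel Y" and A: "A \<in> sigma_plus M X"
    and g: "g \<in> borel_measurable borel"
    and integrable_g: "integrable M (\<lambda>\<omega>. g (X \<omega>))" and integrable_Y: "integrable M Y"
  shows "cond_expect_on M A (\<lambda>\<omega>. g (X \<omega>) * Y \<omega>) = cond_expect_on M A (\<lambda>\<omega>. g (X \<omega>)) * expectation Y"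
proof -
  have [measurable]: "X \<in> borel_measurable M" "Y \<in> borel_measurable M"
    using indep_var_rv1[OF indep] indep_var_rv2[OF indep] by auto
  obtain S where S: "S \<in> sets borel" "A = X -` S \<inter> space M" and A_event: "A \<in> events"
    and A_pos: "prob A > 0"
    using sigma_plusE[OF _ A] by auto
  have indicator_A: "indicator A \<omega> = (indicator S (X \<omega>) :: real)" if "\<omega> \<in> space M" for \<omega>
    using S that by (auto split: split_indicator)
  have h: "(\<lambda>t. indicator S t * g t) \<in> borel_measurable borel"
    using S(1) g by measurable
  have "integrable M (\<lambda>\<omega>. indicator A \<omega> * g (X \<omega>))"
    using integrable_mult_indicator[OF A_event integrable_g] by simp
  then have integrable_h: "integrable M (\<lambda>\<omega>. indicator S (X \<omega>) * g (X \<omega>))"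
    by (rule Bochner_Integration.integrable_cong[OF refl, THEN iffD1, rotated]) (simp add: indicator_A)
  have indep_h: "indep_var borel (\<lambda>\<omega>. indicator S (X \<omega>) * g (X \<omega>)) borel Y"
    using indep_var_compose[OF indep h, of "\<lambda>t. t" borel] by (simp add: comp_def)
  have "(\<integral>\<omega>. indicator A \<omega> * (g (X \<omega>) * Y \<omega>) \<partial>M) = (\<integral>\<omega>. (indicator S (X \<omega>) * g (X \<omega>)) * Y \<omega> \<partial>M)"
    by (intro Bochner_Integration.integral_cong) (simp_all add: indicator_A)
  also have "\<dots> = (\<integral>\<omega>. indicator S (X \<omega>) * g (X \<omega>) \<partial>M) * expectation Y"
    using indep_var_lebesgue_integral[OF indep_h integrable_h integrable_Y] .
  also have "(\<integral>\<omega>. indicator S (X \<omega>) * g (X \<omega>) \<partial>M) = (\<integral>\<omega>. indicator A \<omega> * g (X \<omega>) \<partial>M)"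
    by (intro Bochner_Integration.integral_cong) (simp_all add: indicator_A)
  finally show ?thesis
    using A_event A_pos g by (simp add: cond_expect_on_eq_indicator)
qed

lemma (in prob_space) cond_prob_pair_in_PXY_of_indep:
  fixes X Y :: "'a \<Rightarrow> real"
  assumes indep: "indep_var borel X borel Y" and A: "A \<in> sigma_plus M X" and B: "B \<in> sigma_plus M X"
    and X: "integrable M X" and Y: "integrable M Y" and XY: "integrable M (\<lambda>\<omega>. X \<omega> * Y \<omega>)"
  shows "cond_prob M A \<Otimes>\<^sub>M cond_prob M B \<in> PXY M X Y"
proof -
  have X_measurable: "X \<in> borel_measurable M"
    using indep_var_rv1[OF indep] by auto
  have factor: "cond_expect_on M C (\<lambda>\<omega>. X \<omega> * Y \<omega>) = cond_expect_on M C X * expectation Y"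
    "cond_expect_on M C Y = expectation Y" if C: "C \<in> sigma_plus M X" for C
  proof -
    obtain C_event: "C \<in> events" and C_pos: "prob C > 0"
      using sigma_plusE[OF X_measurable C] by auto
    have one: "cond_expect_on M C (\<lambda>_. 1) = 1"
      using prob_space.prob_space[OF prob_space_cond_prob[OF C_event C_pos]]
      by (simp add: cond_expect_on_def)
    have id_measurable: "(\<lambda>t::real. t) \<in> borel_measurable borel"
      and one_measurable: "(\<lambda>t::real. 1::real) \<in> borel_measurable borel"
      by simp_all
    show "cond_expect_on M C (\<lambda>\<omega>. X \<omega> * Y \<omega>) = cond_expect_on M C X * expectation Y"
      using cond_expect_on_indep_mult[OF indep C id_measurable X Y] .
    show "cond_expect_on M C Y = expectation Y"
      using cond_expect_on_indep_mult[OF indep C one_measurable _ Y] one by simp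
  qed
  show ?thesis
    using sigma_plusE[OF X_measurable A] sigma_plusE[OF X_measurable B]
    by (subst cond_prob_pair_in_PXY_iff[OF _ _ _ _ X Y XY]) (auto simp: factor[OF A] factor[OF B])
qed

theorem proposition4p2:
  fixes M :: "'a measure" and X Y :: "'a \<Rightarrow> real"
  assumes "prob_space M"
    and "X \<in> borel_measurable M" and "Y \<in> borel_measurable M"
    and "integrable M X" and "integrable M Y" and "integrable M (\<lambda>\<omega>. X \<omega> * Y \<omega>)"
  shows "(prob_space.indep_var M borel X borel Y \<longrightarrow>
            {cond_prob M A \<Otimes>\<^sub>M cond_prob M B | A B. A \<in> sigma_plus M X \<and> B \<in> sigma_plus M X} \<subseteq> PXY M X Y \<and>
            {cond_prob M A \<Otimes>\<^sub>M cond_prob M B | A B. A \<in> sigma_plus M Y \<and> B \<in> sigma_plus M Y} \<subseteq> PXY M X Y)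
       \<and> ({cond_prob M A \<Otimes>\<^sub>M cond_prob M B | A B. A \<in> sigma_plus M X \<and> B \<in> sigma_plus M X} \<subseteq> PXY M X Y \<longrightarrow>
            (\<forall>A\<in>sigma_plus M X. \<forall>B\<in>sigma_plus M X.
               cond_expect_on M A (\<lambda>\<omega>. X \<omega> * Y \<omega>) + cond_expect_on M B (\<lambda>\<omega>. X \<omega> * Y \<omega>)
               - cond_expect_on M A X * cond_expect_on M B Y
               - cond_expect_on M A Y * cond_expect_on M B X \<ge> 0) \<and>
            (\<forall>A\<in>sigma_plus M X.
               cond_expect_on M A (\<lambda>\<omega>. X \<omega> * Y \<omega>) \<ge> cond_expect_on M A X * cond_expect_on M A Y))"
proof -
  interpret prob_space M by fact
  let ?pairs = "\<lambda>Z. {cond_prob M A \<Otimes>\<^sub>M cond_prob M B | A B. A \<in> sigma_plus M Z \<and> B \<in> sigma_plus M Z}"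
  have YX: "integrable M (\<lambda>\<omega>. Y \<omega> * X \<omega>)"
    using assms(6) by (simp add: mult.commute)
  have indep_X: "?pairs X \<subseteq> PXY M X Y" if "indep_var borel X borel Y"
    using cond_prob_pair_in_PXY_of_indep[OF that _ _ assms(4-6)] by blast
  have indep_Y: "?pairs Y \<subseteq> PXY M X Y" if "indep_var borel X borel Y"
    using cond_prob_pair_in_PXY_of_indep[OF indep_var_sym[OF that] _ _ assms(5,4) YX]
    by (auto simp: PXY_swap[of M X])
  have nonneg: "0 \<le> cond_expect_on M A (\<lambda>\<omega>. X \<omega> * Y \<omega>) + cond_expect_on M B (\<lambda>\<omega>. X \<omega> * Y \<omega>)
       - cond_expect_on M A X * cond_expect_on M B Y - cond_expect_on M A Y * cond_expect_on M B X"
    if "?pairs X \<subseteq> PXY M X Y" and A: "A \<in> sigma_plus M X" and B: "B \<in> sigma_plus M X" for A B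
    using that sigma_plusE[OF assms(2) A] sigma_plusE[OF assms(2) B]
    by (subst cond_prob_pair_in_PXY_iff[symmetric, OF _ _ _ _ assms(4-6)]) blast+
  have diagonal: "cond_expect_on M A X * cond_expect_on M A Y \<le> cond_expect_on M A (\<lambda>\<omega>. X \<omega> * Y \<omega>)"
    if "?pairs X \<subseteq> PXY M X Y" and "A \<in> sigma_plus M X" for A
    using nonneg[OF that that(2)] by (simp add: mult.commute)
  show ?thesis
    using indep_X indep_Y nonneg diagonal by auto
qed

end
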